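(* Let $w\colon E\to(0,\infty)$ be a weight function on the edges of the hypercube graph, let $v$ be a game on $N$, and for each $i\in N$ let $v_{i,w}\in\ell^2(V)$ be the unique function with $v_{i,w}(\emptyset)=0$ and $\mathrm{d}v_{i,w} = P_w\mathrm{d}_i v$. Then: (a) $\sum_{i\in N} v_{i,w} = v$. (b) If $v(S\cup\{i\})-v(S)=0$ for all $S\subset N\setminus\{i\}$, then $v_{i,w}=0$. (c) If $\sigma$ is a permutation of $N$, then $(\sigma^*v)_{i,\sigma^*w} = \sigma^*(v_{\sigma(i),w})$ for all $i\in N$. In particular, if $\sigma$ swaps $i$ and $j$, $\sigma^*v=v$ and $\sigma^*w=w$, then $v_{i,w}=\sigma^*(v_{j,w})$. (d) For any two games $v,v'$ and $\alpha,\alpha'\in\mathbb{R}$, $(\alpha v+\alpha' v')_{i,w} = \alpha v_{i,w}+\alpha' v'_{i,w}$.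
   Context: Let $N$ be a finite set of players. A game is a function $v\colon 2^N\to\mathbb{R}$ with $v(\emptyset)=0$. The hypercube graph $G=(V,E)$ has $V=2^N$ and oriented edges $E=\{(S,S\cup\{i\}) : i\in N,\ S\subset N\setminus\{i\}\}$. $\ell^2(V)$ is the space of real functions on $V$. Given $w\colon E\to(0,\infty)$, $\ell^2_w(E)$ is the space of real functions on $E$ with inner product $\langle f,g\rangle_w=\sum_{e\in E}w(e)f(e)g(e)$. $\mathrm{d}\colon \ell^2(V)\to\ell^2_w(E)$ is $\mathrm{d}u(S,S\cup\{i\}) = u(S\cup\{i\})-u(S)$, with range $\mathcal{R}(\mathrm{d})$. For $i\in N$, $\mathrm{d}_i\colon\ell^2(V)\to\ell^2_w(E)$ is defined by $\mathrm{d}_i u(S,S\cup\{j\}) = u(S\cup\{i\})-u(S)$ if $j=i$ and $0$ if $j\ne i$. $P_w$ is the $\langle\cdot,\cdot\rangle_w$-orthogonal projection of $\ell^2_w(E)$ onto $\mathcal{R}(\mathrm{d})$. For a permutation $\sigma$ of $N$, $\sigma^*$ acts on vertex functions by $(\sigma^*u)(S)=u(\sigma(S))$ and on edge functions by $(\sigma^*f)(S,S\cup\{i\}) = f(\sigma(S),\sigma(S)\cup\{\sigma(i)\})$. *)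

theory Defs
  imports "HOL-Combinatorics.Combinatorics"
begin

text \<open>Vertices V = Pow N, vertex functions 'a set => real.
  Oriented edges (S, S \<union> {i}) are encoded as pairs (S, i) with i \<in> N, S \<subseteq> N - {i}.
  Edge functions are functions on such pairs; the coboundaries below vanish off E.\<close>

definition edges :: "'a set \<Rightarrow> ('a set \<times> 'a) set" where
  "edges N = {(S, i). i \<in> N \<and> S \<subseteq> N - {i}}"

definition dV :: "'a set \<Rightarrow> ('a set \<Rightarrow> real) \<Rightarrow> ('a set \<times> 'a \<Rightarrow> real)" where
  "dV N u = (\<lambda>(S, i). if (S, i) \<in> edges N then u (insert i S) - u S else 0)"

definition dI :: "'a set \<Rightarrow> 'a \<Rightarrow> ('a set \<Rightarrow> real) \<Rightarrow> ('a set \<times> 'a \<Rightarrow> real)" where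
  "dI N i u = (\<lambda>(S, j). if (S, j) \<in> edges N \<and> j = i then u (insert i S) - u S else 0)"

definition winner :: "'a set \<Rightarrow> ('a set \<times> 'a \<Rightarrow> real) \<Rightarrow> ('a set \<times> 'a \<Rightarrow> real)
    \<Rightarrow> ('a set \<times> 'a \<Rightarrow> real) \<Rightarrow> real" where
  "winner N w f g = (\<Sum>e\<in>edges N. w e * f e * g e)"

definition rangeD :: "'a set \<Rightarrow> ('a set \<times> 'a \<Rightarrow> real) set" where
  "rangeD N = range (dV N)"

definition projW :: "'a set \<Rightarrow> ('a set \<times> 'a \<Rightarrow> real) \<Rightarrow> ('a set \<times> 'a \<Rightarrow> real)
    \<Rightarrow> ('a set \<times> 'a \<Rightarrow> real)" where
  "projW N w f = (THE g. g \<in> rangeD N \<and> (\<forall>h\<in>rangeD N. winner N w (\<lambda>e. f e - g e) h = 0))"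

definition component :: "'a set \<Rightarrow> ('a set \<times> 'a \<Rightarrow> real) \<Rightarrow> ('a set \<Rightarrow> real) \<Rightarrow> 'a
    \<Rightarrow> ('a set \<Rightarrow> real)" where
  "component N w v i = (THE u. u {} = 0 \<and> (\<forall>S. \<not> S \<subseteq> N \<longrightarrow> u S = 0)
      \<and> dV N u = projW N w (dI N i v))"

definition pullV :: "('a \<Rightarrow> 'a) \<Rightarrow> ('a set \<Rightarrow> real) \<Rightarrow> ('a set \<Rightarrow> real)" where
  "pullV \<sigma> u = (\<lambda>S. u (\<sigma> ` S))"

definition pullE :: "('a \<Rightarrow> 'a) \<Rightarrow> ('a set \<times> 'a \<Rightarrow> real) \<Rightarrow> ('a set \<times> 'a \<Rightarrow> real)" where
  "pullE \<sigma> f = (\<lambda>(S, i). f (\<sigma> ` S, \<sigma> i))"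

end

theory Submission
  imports Defs
begin

text \<open>The weighted projection P_w onto the range of d is linear and commutes with relabelling
  players, and d is injective on vertex functions vanishing at the empty set. Each claim about
  v_{i,w} therefore reduces, after applying d, to a property of d_i v: the d_i v add up to d v,
  which P_w fixes; d_i v vanishes for a null player i; permuting players relabels d_i; and d_i
  is linear. The projection itself exists by Gram-Schmidt over the images under d of the
  indicator functions of coalitions.\<close>

lemma finite_edges: "finite N \<Longrightarrow> finite (edges N)"
  by (rule finite_subset[of _ "Pow N \<times> N"]) (auto simp: edges_def)

lemma dV_lin: "dV N (\<lambda>S. a * u S + b * u' S) = (\<lambda>e. a * dV N u e + b * dV N u' e)"
  by (rule ext) (auto simp: dV_def algebra_simps split: prod.splits)

lemma dV_diff: "dV N (\<lambda>S. u S - u' S) = (\<lambda>e. dV N u e - dV N u' e)"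
  by (rule ext) (auto simp: dV_def algebra_simps split: prod.splits)

lemma dV_sum: "dV N (\<lambda>S. \<Sum>i\<in>I. u i S) = (\<lambda>e. \<Sum>i\<in>I. dV N (u i) e)"
  by (rule ext) (auto simp: dV_def sum_subtractf split: prod.splits)

lemma dV_eq_Pow_basis_expansion:
  assumes "finite N"
  shows "dV N u = (\<lambda>e. \<Sum>T\<in>Pow N. u T * dV N (\<lambda>S. if S = T then 1 else 0) e)"
proof
  fix e :: "'a set \<times> 'a"
  obtain S i where e: "e = (S, i)" by (cases e)
  show "dV N u e = (\<Sum>T\<in>Pow N. u T * dV N (\<lambda>S. if S = T then 1 else 0) e)"
  proof (cases "(S, i) \<in> edges N")
    case True
    then have "insert i S \<in> Pow N" "S \<in> Pow N" by (auto simp: edges_def)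
    with True assms show ?thesis
      by (simp add: e dV_def right_diff_distrib sum_subtractf if_distrib[of "(*) _"] cong: if_cong)
  qed (simp add: e dV_def)
qed

lemma eq_on_Pow_if_dV_eq:
  assumes "finite N" "dV N u1 = dV N u2" "u1 {} = u2 {}" "S \<subseteq> N"
  shows "u1 S = u2 S"
proof -
  have "finite S" using assms(1,4) finite_subset by blast
  then show ?thesis using assms(4)
  proof (induction S rule: finite_induct)
    case (insert x F)
    then have "(F, x) \<in> edges N" by (auto simp: edges_def)
    moreover have "dV N u1 (F, x) = dV N u2 (F, x)" using assms(2) by simp
    ultimately show ?case using insert by (simp add: dV_def)
  qed (simp add: assms(3))
qed

lemma winner_sum_right:
  "winner N w f (\<lambda>e. \<Sum>T\<in>A. c T * b T e) = (\<Sum>T\<in>A. c T * winner N w f (b T))"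
  by (simp add: winner_def sum_distrib_left mult_ac sum.swap[of _ A])

lemma winner_add_right: "winner N w f (\<lambda>e. g e + h e) = winner N w f g + winner N w f h"
  by (simp add: winner_def algebra_simps sum.distrib)

lemma winner_add_left: "winner N w (\<lambda>e. f e + g e) h = winner N w f h + winner N w g h"
  by (simp add: winner_def algebra_simps sum.distrib)

lemma winner_scale_left: "winner N w (\<lambda>e. a * f e) h = a * winner N w f h"
  by (simp add: winner_def algebra_simps sum_distrib_left)

lemma winner_diff_left: "winner N w (\<lambda>e. f e - g e) h = winner N w f h - winner N w g h"
  by (simp add: winner_def algebra_simps sum_subtractf)

lemma winner_self_eq_0D:
  assumes "finite N" "\<forall>e\<in>edges N. w e > 0" "winner N w r r = 0" "e \<in> edges N"
  shows "r e = 0"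
proof -
  have "\<forall>x\<in>edges N. w x * r x * r x = 0"
    using assms(3) unfolding winner_def
    by (subst (asm) sum_nonneg_eq_0_iff) (use assms(1,2) finite_edges in \<open>auto simp: mult.assoc\<close>)
  then have "w e * (r e * r e) = 0" using assms(4) by (simp add: mult.assoc)
  then show ?thesis using assms(2,4) by auto
qed

lemma winner_right_eq_0_if_self_eq_0:
  assumes "finite N" "\<forall>e\<in>edges N. w e > 0" "winner N w r r = 0"
  shows "winner N w f r = 0"
  using winner_self_eq_0D[OF assms] by (simp add: winner_def)

lemma orthogonal_projection_onto_span_exists:
  assumes fN: "finite N" and pos: "\<forall>e\<in>edges N. w e > 0" and "finite A"
  shows "\<exists>c. \<forall>T\<in>A. winner N w (\<lambda>e. f e - (\<Sum>S\<in>A. c S * b S e)) (b T) = 0"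
  using \<open>finite A\<close>
proof (induction A arbitrary: f rule: finite_induct)
  case (insert T A)
  obtain cP where cP: "\<forall>S\<in>A. winner N w (\<lambda>e. b T e - (\<Sum>S\<in>A. cP S * b S e)) (b S) = 0"
    using insert.IH by blast
  obtain cG where cG: "\<forall>S\<in>A. winner N w (\<lambda>e. f e - (\<Sum>S\<in>A. cG S * b S e)) (b S) = 0"
    using insert.IH by blast
  define r where "r = (\<lambda>e. b T e - (\<Sum>S\<in>A. cP S * b S e))"
  define x where "x = (\<lambda>e. f e - (\<Sum>S\<in>A. cG S * b S e))"
  have against_T: "winner N w y (b T) = winner N w y r"
    if "\<forall>S\<in>A. winner N w y (b S) = 0" for y
  proof -
    have "b T = (\<lambda>e. r e + (\<Sum>S\<in>A. cP S * b S e))" by (simp add: r_def)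
    then show ?thesis
      using that by (simp add: winner_add_right winner_sum_right)
  qed
  \<comment> \<open>r is the part of b T orthogonal to the span of A; correcting the residual along r
    also makes it orthogonal to b T.\<close>
  have r_perp: "\<forall>S\<in>A. winner N w r (b S) = 0" using cP by (simp add: r_def)
  show ?case
  proof (cases "winner N w r r = 0")
    case True
    have "\<forall>S\<in>insert T A. winner N w x (b S) = 0"
      using cG against_T winner_right_eq_0_if_self_eq_0[OF fN pos True] by (simp add: x_def)
    moreover have "(\<Sum>S\<in>insert T A. (cG(T := 0)) S * b S e) = (\<Sum>S\<in>A. cG S * b S e)" for e
      using insert.hyps by (auto intro: sum.cong)
    ultimately show ?thesis unfolding x_def by (intro exI[of _ "cG(T := 0)"]) simp
  next
    case False
    define k where "k = winner N w x r / winner N w r r"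
    define c where "c = (\<lambda>S. if S = T then k else cG S - k * cP S)"
    have "(\<Sum>S\<in>insert T A. c S * b S e) = (\<Sum>S\<in>A. cG S * b S e) + k * r e" for e
    proof -
      have "(\<Sum>S\<in>A. c S * b S e) = (\<Sum>S\<in>A. cG S * b S e - k * (cP S * b S e))"
        using insert.hyps by (intro sum.cong) (auto simp: c_def algebra_simps)
      then show ?thesis
        using insert.hyps by (simp add: c_def r_def algebra_simps sum_subtractf sum_distrib_left)
    qed
    then have residual: "(\<lambda>e. f e - (\<Sum>S\<in>insert T A. c S * b S e)) = (\<lambda>e. x e - k * r e)"
      by (simp add: x_def algebra_simps)
    have perp_A: "\<forall>S\<in>A. winner N w (\<lambda>e. x e - k * r e) (b S) = 0"
      using cG r_perp by (simp add: winner_diff_left winner_scale_left x_def)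
    have "winner N w (\<lambda>e. x e - k * r e) r = 0"
      using False unfolding winner_diff_left winner_scale_left k_def by simp
    with perp_A against_T have "\<forall>S\<in>insert T A. winner N w (\<lambda>e. x e - k * r e) (b S) = 0"
      by simp
    then show ?thesis unfolding residual[symmetric] by blast
  qed
qed simp

lemma projW_exists:
  assumes fN: "finite N" and pos: "\<forall>e\<in>edges N. w e > 0"
  shows "\<exists>g\<in>rangeD N. \<forall>h\<in>rangeD N. winner N w (\<lambda>e. f e - g e) h = 0"
proof -
  define b where "b T = dV N (\<lambda>S. if S = T then 1 else 0)" for T :: "'a set"
  obtain c where c: "\<forall>T\<in>Pow N. winner N w (\<lambda>e. f e - (\<Sum>S\<in>Pow N. c S * b S e)) (b T) = 0"
    using orthogonal_projection_onto_span_exists[OF fN pos] fN by blast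
  have span: "dV N u = (\<lambda>e. \<Sum>T\<in>Pow N. u T * b T e)" for u
    unfolding b_def by (rule dV_eq_Pow_basis_expansion[OF fN])
  show ?thesis
  proof (intro bexI ballI)
    fix h assume "h \<in> rangeD N"
    then obtain u where "h = dV N u" by (auto simp: rangeD_def)
    then show "winner N w (\<lambda>e. f e - dV N c e) h = 0"
      using c by (simp add: span winner_sum_right)
  qed (simp add: rangeD_def)
qed

lemma projW_unique:
  assumes fN: "finite N" and pos: "\<forall>e\<in>edges N. w e > 0"
    and g1: "g1 \<in> rangeD N" "\<forall>h\<in>rangeD N. winner N w (\<lambda>e. f e - g1 e) h = 0"
    and g2: "g2 \<in> rangeD N" "\<forall>h\<in>rangeD N. winner N w (\<lambda>e. f e - g2 e) h = 0"
  shows "g1 = g2"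
proof
  fix e
  obtain u1 u2 where u: "g1 = dV N u1" "g2 = dV N u2" using g1 g2 by (auto simp: rangeD_def)
  define d where "d = (\<lambda>e. g1 e - g2 e)"
  have "d \<in> rangeD N" by (simp add: d_def u dV_diff[symmetric] rangeD_def)
  then have "winner N w (\<lambda>e. (f e - g2 e) - (f e - g1 e)) d = 0"
    using g1 g2 by (simp add: winner_diff_left)
  then have "winner N w d d = 0" by (simp add: d_def)
  then have "e \<in> edges N \<Longrightarrow> d e = 0" using winner_self_eq_0D[OF fN pos] by blast
  then have "e \<in> edges N \<Longrightarrow> g1 e = g2 e" by (simp add: d_def)
  moreover have "e \<notin> edges N \<Longrightarrow> g1 e = g2 e" by (cases e) (simp add: u dV_def)
  ultimately show "g1 e = g2 e" by blast
qed

lemma projW_eqI: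
  assumes fN: "finite N" and pos: "\<forall>e\<in>edges N. w e > 0"
    and "g \<in> rangeD N" "\<forall>h\<in>rangeD N. winner N w (\<lambda>e. f e - g e) h = 0"
  shows "projW N w f = g"
  unfolding projW_def
  by (rule the_equality) (use assms projW_unique[OF fN pos] in blast)+

lemma projW_in_rangeD_orthogonal:
  assumes fN: "finite N" and pos: "\<forall>e\<in>edges N. w e > 0"
  shows "projW N w f \<in> rangeD N \<and> (\<forall>h\<in>rangeD N. winner N w (\<lambda>e. f e - projW N w f e) h = 0)"
  using projW_exists[OF fN pos, of f] projW_eqI[OF fN pos] by blast

lemma projW_lin:
  assumes fN: "finite N" and pos: "\<forall>e\<in>edges N. w e > 0"
  shows "projW N w (\<lambda>e. a * f e + b * g e) = (\<lambda>e. a * projW N w f e + b * projW N w g e)"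
proof (rule projW_eqI[OF fN pos])
  note f = projW_in_rangeD_orthogonal[OF fN pos, of f]
  note g = projW_in_rangeD_orthogonal[OF fN pos, of g]
  obtain uf ug where "projW N w f = dV N uf" "projW N w g = dV N ug"
    using f g by (auto simp: rangeD_def)
  then show "(\<lambda>e. a * projW N w f e + b * projW N w g e) \<in> rangeD N"
    by (simp add: rangeD_def dV_lin[symmetric])
  have "(\<lambda>e. a * f e + b * g e - (a * projW N w f e + b * projW N w g e))
      = (\<lambda>e. a * (f e - projW N w f e) + b * (g e - projW N w g e))"
    by (simp add: algebra_simps)
  with f g show "\<forall>h\<in>rangeD N. winner N w (\<lambda>e. a * f e + b * g e - (a * projW N w f e + b * projW N w g e)) h = 0"
    by (simp add: winner_add_left winner_scale_left)
qed

lemma projW_rangeD: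
  assumes fN: "finite N" and pos: "\<forall>e\<in>edges N. w e > 0" and "h \<in> rangeD N"
  shows "projW N w h = h"
  by (rule projW_eqI[OF fN pos]) (simp_all add: assms winner_def)

lemma projW_sum:
  assumes fN: "finite N" and pos: "\<forall>e\<in>edges N. w e > 0" and "finite I"
  shows "projW N w (\<lambda>e. \<Sum>i\<in>I. f i e) = (\<lambda>e. \<Sum>i\<in>I. projW N w (f i) e)"
  using \<open>finite I\<close>
proof (induction I rule: finite_induct)
  case empty
  have "(\<lambda>_. 0) = dV N (\<lambda>_. 0)" by (simp add: fun_eq_iff dV_def)
  then have "(\<lambda>_. 0) \<in> rangeD N" unfolding rangeD_def by (metis rangeI)
  then show ?case by (simp add: projW_rangeD[OF fN pos])
next
  case (insert x F)
  then have "projW N w (\<lambda>e. \<Sum>i\<in>insert x F. f i e) = projW N w (\<lambda>e. 1 * f x e + 1 * (\<Sum>i\<in>F. f i e))"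
    by simp
  also have "\<dots> = (\<lambda>e. 1 * projW N w (f x) e + 1 * projW N w (\<lambda>e. \<Sum>i\<in>F. f i e) e)"
    by (rule projW_lin[OF fN pos])
  finally show ?case using insert by simp
qed

lemma image_perm_in_edges_iff:
  assumes "\<sigma> permutes N"
  shows "(\<sigma> ` S, \<sigma> j) \<in> edges N \<longleftrightarrow> (S, j) \<in> edges N"
proof -
  have "\<sigma> x \<in> N \<longleftrightarrow> x \<in> N" for x using permutes_in_image[OF assms] .
  then show ?thesis unfolding edges_def using inj_eq[OF permutes_inj[OF assms]] by auto
qed

lemma dV_pullV: "\<sigma> permutes N \<Longrightarrow> dV N (pullV \<sigma> u) = pullE \<sigma> (dV N u)"
  by (rule ext) (auto simp: dV_def pullV_def pullE_def image_perm_in_edges_iff split: prod.splits)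

lemma dI_pullV: "\<sigma> permutes N \<Longrightarrow> dI N i (pullV \<sigma> v) = pullE \<sigma> (dI N (\<sigma> i) v)"
  by (rule ext)
    (auto simp: dI_def pullV_def pullE_def image_perm_in_edges_iff inj_eq[OF permutes_inj] split: prod.splits)

lemma winner_pullE:
  assumes p: "\<sigma> permutes N"
  shows "winner N (pullE \<sigma> w) (pullE \<sigma> f) (pullE \<sigma> g) = winner N w f g"
proof -
  define h where "h = (\<lambda>(S, j). (\<sigma> ` S, \<sigma> j))"
  have "bij_betw h (edges N) (edges N)"
  proof (rule bij_betw_byWitness[where f'="\<lambda>(S, j). (inv \<sigma> ` S, inv \<sigma> j)"])
    show "h ` edges N \<subseteq> edges N" by (auto simp: h_def image_perm_in_edges_iff[OF p])
    show "(\<lambda>(S, j). (inv \<sigma> ` S, inv \<sigma> j)) ` edges N \<subseteq> edges N"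
      by (auto simp: image_perm_in_edges_iff[OF permutes_inv[OF p]])
  qed (auto simp: h_def image_image permutes_inverses[OF p])[2]
  then have "(\<Sum>e\<in>edges N. w (h e) * f (h e) * g (h e)) = winner N w f g"
    unfolding winner_def by (rule sum.reindex_bij_betw)
  then show ?thesis
    by (simp add: winner_def pullE_def h_def case_prod_beta')
qed

lemma pullE_rangeD: "\<sigma> permutes N \<Longrightarrow> g \<in> rangeD N \<Longrightarrow> pullE \<sigma> g \<in> rangeD N"
  by (auto simp: rangeD_def dV_pullV[symmetric])

lemma projW_pullE:
  assumes fN: "finite N" and pos: "\<forall>e\<in>edges N. w e > 0" and p: "\<sigma> permutes N"
  shows "projW N (pullE \<sigma> w) (pullE \<sigma> f) = pullE \<sigma> (projW N w f)"
proof (rule projW_eqI[OF fN])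
  show "\<forall>e\<in>edges N. pullE \<sigma> w e > 0"
    using pos by (auto simp: pullE_def image_perm_in_edges_iff[OF p])
  note proj = projW_in_rangeD_orthogonal[OF fN pos, of f]
  then show "pullE \<sigma> (projW N w f) \<in> rangeD N"
    using pullE_rangeD[OF p] by blast
  show "\<forall>h\<in>rangeD N. winner N (pullE \<sigma> w) (\<lambda>e. pullE \<sigma> f e - pullE \<sigma> (projW N w f) e) h = 0"
  proof
    fix h assume h: "h \<in> rangeD N"
    have "pullE \<sigma> (pullE (inv \<sigma>) h) = h"
      by (auto simp: pullE_def image_image permutes_inverses[OF p])
    moreover have "(\<lambda>e. pullE \<sigma> f e - pullE \<sigma> (projW N w f) e) = pullE \<sigma> (\<lambda>e. f e - projW N w f e)"
      by (auto simp: pullE_def)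
    ultimately have "winner N (pullE \<sigma> w) (\<lambda>e. pullE \<sigma> f e - pullE \<sigma> (projW N w f) e) h
        = winner N w (\<lambda>e. f e - projW N w f e) (pullE (inv \<sigma>) h)"
      by (metis winner_pullE[OF p])
    also have "\<dots> = 0"
      using proj pullE_rangeD[OF permutes_inv[OF p] h] by blast
    finally show "winner N (pullE \<sigma> w) (\<lambda>e. pullE \<sigma> f e - pullE \<sigma> (projW N w f) e) h = 0" .
  qed
qed

lemma component_char:
  assumes fN: "finite N" and pos: "\<forall>e\<in>edges N. w e > 0"
  shows "component N w v i {} = 0 \<and> dV N (component N w v i) = projW N w (dI N i v)"
proof -
  let ?P = "\<lambda>u. u {} = 0 \<and> (\<forall>S. \<not> S \<subseteq> N \<longrightarrow> u S = 0) \<and> dV N u = projW N w (dI N i v)"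
  obtain u0 where u0: "projW N w (dI N i v) = dV N u0"
    using projW_in_rangeD_orthogonal[OF fN pos, of "dI N i v"] by (auto simp: rangeD_def)
  define u where "u = (\<lambda>S. if S \<subseteq> N then u0 S - u0 {} else 0)"
  have "dV N u = dV N u0"
    by (rule ext) (auto simp: dV_def edges_def u_def split: prod.splits)
  then have "?P u" using u0 by (simp add: u_def)
  moreover have "u' = u" if "?P u'" for u'
  proof
    fix S show "u' S = u S"
    proof (cases "S \<subseteq> N")
      case True
      then show ?thesis using \<open>?P u\<close> that eq_on_Pow_if_dV_eq[OF fN, of u' u S] by simp
    qed (use \<open>?P u\<close> that in simp)
  qed
  ultimately have "\<exists>!u. ?P u" by (rule ex1I)
  from theI'[OF this] show ?thesis unfolding component_def by blast
qed

lemma component_eqI: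
  assumes fN: "finite N" and pos: "\<forall>e\<in>edges N. w e > 0"
    and "u {} = 0" "dV N u = projW N w (dI N i v)" "S \<subseteq> N"
  shows "component N w v i S = u S"
proof (rule eq_on_Pow_if_dV_eq[OF fN _ _ \<open>S \<subseteq> N\<close>])
  show "dV N (component N w v i) = dV N u" using component_char[OF fN pos] assms(4) by simp
  show "component N w v i {} = u {}" using component_char[OF fN pos] assms(3) by simp
qed

lemma component_cong:
  assumes "\<forall>e\<in>edges N. w e = w' e" "\<forall>S. S \<subseteq> N \<longrightarrow> v S = v' S"
  shows "component N w v i = component N w' v' i"
proof -
  have "winner N w = winner N w'"
    using assms(1) by (intro ext) (simp add: winner_def)
  then have "projW N w = projW N w'" unfolding projW_def by simp
  moreover have "dI N i v = dI N i v'"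
  proof
    fix e :: "'a set \<times> 'a"
    obtain S j where e: "e = (S, j)" by (cases e)
    show "dI N i v e = dI N i v' e"
    proof (cases "(S, j) \<in> edges N")
      case True
      then have "insert j S \<subseteq> N" "S \<subseteq> N" by (auto simp: edges_def)
      then have "v (insert j S) = v' (insert j S)" "v S = v' S" using assms(2) by blast+
      with True show ?thesis by (auto simp: e dI_def)
    qed (simp add: e dI_def)
  qed
  ultimately show ?thesis unfolding component_def by simp
qed

lemma component_sum:
  assumes fN: "finite N" and pos: "\<forall>e\<in>edges N. w e > 0" and "v {} = 0" "S \<subseteq> N"
  shows "(\<Sum>i\<in>N. component N w v i S) = v S"
proof (rule eq_on_Pow_if_dV_eq[OF fN _ _ \<open>S \<subseteq> N\<close>])
  have sum_dI: "(\<lambda>e. \<Sum>i\<in>N. dI N i v e) = dV N v"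
  proof
    fix e :: "'a set \<times> 'a"
    obtain T j where e: "e = (T, j)" by (cases e)
    show "(\<Sum>i\<in>N. dI N i v e) = dV N v e"
    proof (cases "(T, j) \<in> edges N")
      case True
      then have "j \<in> N" by (auto simp: edges_def)
      with True show ?thesis by (simp add: e dI_def dV_def fN)
    qed (simp add: e dI_def dV_def)
  qed
  have "dV N (\<lambda>S. \<Sum>i\<in>N. component N w v i S) = (\<lambda>e. \<Sum>i\<in>N. projW N w (dI N i v) e)"
    using component_char[OF fN pos] by (simp add: dV_sum)
  also have "\<dots> = projW N w (dV N v)"
    unfolding projW_sum[OF fN pos fN, symmetric] sum_dI ..
  also have "\<dots> = dV N v"
    by (rule projW_rangeD[OF fN pos]) (simp add: rangeD_def)
  finally show "dV N (\<lambda>S. \<Sum>i\<in>N. component N w v i S) = dV N v" .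
  show "(\<Sum>i\<in>N. component N w v i {}) = v {}"
    using component_char[OF fN pos] \<open>v {} = 0\<close> by simp
qed

lemma component_null_player:
  assumes fN: "finite N" and pos: "\<forall>e\<in>edges N. w e > 0"
    and "\<forall>S. S \<subseteq> N - {i} \<longrightarrow> v (insert i S) - v S = 0" "S \<subseteq> N"
  shows "component N w v i S = 0"
proof (rule component_eqI[OF fN pos])
  have "dI N i v = dV N (\<lambda>_. 0)"
    using assms(3) by (intro ext) (auto simp: dI_def dV_def edges_def split: prod.splits)
  then show "dV N (\<lambda>_. 0) = projW N w (dI N i v)"
    by (simp add: projW_rangeD[OF fN pos] rangeD_def)
qed (use assms in auto)

lemma component_pullV:
  assumes fN: "finite N" and pos: "\<forall>e\<in>edges N. w e > 0" and p: "\<sigma> permutes N" and "S \<subseteq> N"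
  shows "component N (pullE \<sigma> w) (pullV \<sigma> v) i S = pullV \<sigma> (component N w v (\<sigma> i)) S"
proof (rule component_eqI[OF fN _ _ _ \<open>S \<subseteq> N\<close>])
  show "\<forall>e\<in>edges N. pullE \<sigma> w e > 0"
    using pos by (auto simp: pullE_def image_perm_in_edges_iff[OF p])
  show "pullV \<sigma> (component N w v (\<sigma> i)) {} = 0"
    using component_char[OF fN pos] by (simp add: pullV_def)
  have "dV N (pullV \<sigma> (component N w v (\<sigma> i))) = pullE \<sigma> (projW N w (dI N (\<sigma> i) v))"
    using component_char[OF fN pos] by (simp add: dV_pullV[OF p])
  also have "\<dots> = projW N (pullE \<sigma> w) (dI N i (pullV \<sigma> v))"
    by (simp add: dI_pullV[OF p] projW_pullE[OF fN pos p])
  finally show "dV N (pullV \<sigma> (component N w v (\<sigma> i))) = projW N (pullE \<sigma> w) (dI N i (pullV \<sigma> v))" .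
qed

lemma component_transpose:
  assumes fN: "finite N" and pos: "\<forall>e\<in>edges N. w e > 0" and "i \<in> N" "j \<in> N" "S \<subseteq> N"
    and "\<forall>S. S \<subseteq> N \<longrightarrow> pullV (transpose i j) v S = v S"
    and "\<forall>e\<in>edges N. pullE (transpose i j) w e = w e"
  shows "component N w v i S = pullV (transpose i j) (component N w v j) S"
proof -
  have "component N w v i = component N (pullE (transpose i j) w) (pullV (transpose i j) v) i"
    using assms(6,7) by (intro component_cong) auto
  then show ?thesis
    using component_pullV[OF fN pos permutes_swap_id[OF assms(3,4)] assms(5), of v i] by simp
qed

lemma component_lin:
  assumes fN: "finite N" and pos: "\<forall>e\<in>edges N. w e > 0" and "S \<subseteq> N"
  shows "component N w (\<lambda>S. \<alpha> * v S + \<alpha>' * v' S) i S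
    = \<alpha> * component N w v i S + \<alpha>' * component N w v' i S"
proof (rule component_eqI[OF fN pos _ _ \<open>S \<subseteq> N\<close>])
  have "dI N i (\<lambda>S. \<alpha> * v S + \<alpha>' * v' S) = (\<lambda>e. \<alpha> * dI N i v e + \<alpha>' * dI N i v' e)"
    by (rule ext) (auto simp: dI_def algebra_simps split: prod.splits)
  then show "dV N (\<lambda>S. \<alpha> * component N w v i S + \<alpha>' * component N w v' i S)
      = projW N w (dI N i (\<lambda>S. \<alpha> * v S + \<alpha>' * v' S))"
    using component_char[OF fN pos] by (simp add: dV_lin projW_lin[OF fN pos])
qed (use component_char[OF fN pos] in simp)

theorem theorem4p1:
  fixes N :: "'a set" and w :: "'a set \<times> 'a \<Rightarrow> real" and v :: "'a set \<Rightarrow> real"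
  assumes "finite N"
    and "\<forall>e\<in>edges N. w e > 0"
    and "v {} = 0"
  shows "(\<forall>S. S \<subseteq> N \<longrightarrow> (\<Sum>i\<in>N. component N w v i S) = v S)
    \<and> (\<forall>i\<in>N. (\<forall>S. S \<subseteq> N - {i} \<longrightarrow> v (insert i S) - v S = 0)
           \<longrightarrow> (\<forall>S. S \<subseteq> N \<longrightarrow> component N w v i S = 0))
    \<and> (\<forall>\<sigma>. \<sigma> permutes N \<longrightarrow> (\<forall>i\<in>N. \<forall>S. S \<subseteq> N \<longrightarrow>
           component N (pullE \<sigma> w) (pullV \<sigma> v) i S = pullV \<sigma> (component N w v (\<sigma> i)) S))
    \<and> (\<forall>i\<in>N. \<forall>j\<in>N. (\<forall>S. S \<subseteq> N \<longrightarrow> pullV (transpose i j) v S = v S)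
           \<and> (\<forall>e\<in>edges N. pullE (transpose i j) w e = w e)
           \<longrightarrow> (\<forall>S. S \<subseteq> N \<longrightarrow> component N w v i S = pullV (transpose i j) (component N w v j) S))
    \<and> (\<forall>v' (\<alpha>::real) (\<alpha>'::real). v' {} = 0 \<longrightarrow> (\<forall>i\<in>N. \<forall>S. S \<subseteq> N \<longrightarrow>
           component N w (\<lambda>S. \<alpha> * v S + \<alpha>' * v' S) i S
             = \<alpha> * component N w v i S + \<alpha>' * component N w v' i S))"
proof (intro conjI)
  show "\<forall>S. S \<subseteq> N \<longrightarrow> (\<Sum>i\<in>N. component N w v i S) = v S"
    using component_sum[OF assms(1,2), of v] assms(3) by blast
  show "\<forall>i\<in>N. (\<forall>S. S \<subseteq> N - {i} \<longrightarrow> v (insert i S) - v S = 0)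
           \<longrightarrow> (\<forall>S. S \<subseteq> N \<longrightarrow> component N w v i S = 0)"
    using component_null_player[OF assms(1,2)] by blast
  show "\<forall>\<sigma>. \<sigma> permutes N \<longrightarrow> (\<forall>i\<in>N. \<forall>S. S \<subseteq> N \<longrightarrow>
           component N (pullE \<sigma> w) (pullV \<sigma> v) i S = pullV \<sigma> (component N w v (\<sigma> i)) S)"
    using component_pullV[OF assms(1,2)] by blast
  show "\<forall>i\<in>N. \<forall>j\<in>N. (\<forall>S. S \<subseteq> N \<longrightarrow> pullV (transpose i j) v S = v S)
           \<and> (\<forall>e\<in>edges N. pullE (transpose i j) w e = w e)
           \<longrightarrow> (\<forall>S. S \<subseteq> N \<longrightarrow> component N w v i S = pullV (transpose i j) (component N w v j) S)"
    using component_transpose[OF assms(1,2)] by blast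
  show "\<forall>v' (\<alpha>::real) (\<alpha>'::real). v' {} = 0 \<longrightarrow> (\<forall>i\<in>N. \<forall>S. S \<subseteq> N \<longrightarrow>
           component N w (\<lambda>S. \<alpha> * v S + \<alpha>' * v' S) i S
             = \<alpha> * component N w v i S + \<alpha>' * component N w v' i S)"
    using component_lin[OF assms(1,2)] by blast
qed

end
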